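(* Let $p \geq 3$ be a prime and $x, y \in \mathbb{Z}$ with $x^2 - 2 = y^p$ and $y \neq -1$. Then $x$ and $y$ are both odd, $y \equiv 7 \pmod 8$, and every prime dividing $y$ is $\equiv \pm 1 \pmod 8$. *)

theory Defs
  imports "HOL-Computational_Algebra.Primes"
begin

end

theory Submission
  imports Defs "HOL-Number_Theory.Number_Theory"
begin

text \<open>Since \<open>x\<^sup>2 - 2\<close> is never divisible by 4 while \<open>y\<^sup>p\<close> is divisible by 4 for even \<open>y\<close>,
  \<open>y\<close> is odd, hence so is \<open>x\<close>. Odd squares are 1 mod 8, so \<open>y\<^sup>p \<equiv> -1 (mod 8)\<close>, and for odd
  \<open>p\<close> this gives \<open>y \<equiv> 7 (mod 8)\<close>. Finally every prime \<open>q\<close> dividing \<open>y\<close> is odd and has 2 as a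
  quadratic residue (\<open>x\<^sup>2 \<equiv> 2 (mod q)\<close>), which by the second supplement to quadratic
  reciprocity, proved here from Gauss's lemma, forces \<open>q \<equiv> \<plusminus>1 (mod 8)\<close>.\<close>

lemma odd_square_mod_8:
  fixes y :: int
  assumes "odd y"
  shows "y\<^sup>2 mod 8 = 1"
proof -
  have "y mod 8 = 1 \<or> y mod 8 = 3 \<or> y mod 8 = 5 \<or> y mod 8 = 7" using assms by presburger
  moreover have "y\<^sup>2 mod 8 = (y mod 8)\<^sup>2 mod 8" by (simp add: power_mod)
  ultimately show ?thesis by auto
qed

lemma odd_power_mod_8:
  fixes y :: int and p :: nat
  assumes "odd y" "odd p"
  shows "y ^ p mod 8 = y mod 8"
proof -
  obtain m where p: "p = 2 * m + 1" using \<open>odd p\<close> oddE by blast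
  have "(y\<^sup>2) ^ m mod 8 = 1"
    using power_mod[of "y\<^sup>2" 8 m] odd_square_mod_8[OF \<open>odd y\<close>] by simp
  then have "y * (y\<^sup>2) ^ m mod 8 = y mod 8"
    by (metis mod_mult_right_eq mult.right_neutral)
  then show ?thesis by (simp add: p power_add power_mult)
qed

lemma four_not_dvd_square_minus_two:
  fixes x :: int
  shows "\<not> 4 dvd x\<^sup>2 - 2"
proof (cases "even x")
  case True
  then obtain k where "x = 2 * k" by blast
  then have "x\<^sup>2 - 2 = 4 * k\<^sup>2 - 2" by (simp add: power_mult_distrib)
  then show ?thesis by presburger
next
  case False
  then have "odd (x\<^sup>2 - 2)" by simp
  then show ?thesis by (metis dvd_trans even_numeral)
qed

lemma Legendre_two_eq_neg_one:
  fixes q :: nat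
  assumes "prime q" "q mod 8 \<in> {3, 5}"
  shows "Legendre 2 (int q) = -1"
proof -
  have q2: "2 < q" using assms by auto
  have "\<not> [2 = 0] (mod int q)"
    using q2 by (auto simp: cong_0_iff dest: zdvd_imp_le)
  then interpret G: GAUSS q 2 using assms q2 by unfold_locales auto
  \<comment> \<open>Of the residues \<open>2x\<close>, \<open>0 < x \<le> h\<close>, those above \<open>q/2\<close> are the ones with \<open>x > h/2\<close>.\<close>
  define h where "h = (int q - 1) div 2"
  have "2 * h < int q" unfolding h_def by linarith
  then have "G.C = (\<lambda>x. 2 * x) ` {0 <.. h}"
    unfolding G.C_def G.B_def G.A_def h_def[symmetric] image_image
    by (intro image_cong) auto
  then have "G.E = (\<lambda>x. 2 * x) ` {h div 2 <.. h}"
    unfolding G.E_def h_def[symmetric] by (auto simp: image_iff)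
  then have "card G.E = nat (h - h div 2)"
    by (simp add: card_image inj_on_def)
  moreover have "odd (nat (h - h div 2))"
  proof -
    have "q mod 8 = 3 \<or> q mod 8 = 5" using assms(2) by simp
    then have "int q mod 8 = 3 \<or> int q mod 8 = 5" by presburger
    then have "odd (h - h div 2)" "h - h div 2 \<ge> 0" unfolding h_def by presburger+
    then show ?thesis by (simp add: even_nat_iff)
  qed
  ultimately show ?thesis using G.gauss_lemma by simp
qed

lemma QuadRes_two_imp_mod_8:
  fixes q :: int
  assumes "prime q" "odd q" "QuadRes q 2"
  shows "q mod 8 = 1 \<or> q mod 8 = 7"
proof (rule ccontr)
  assume "\<not> (q mod 8 = 1 \<or> q mod 8 = 7)"
  with \<open>odd q\<close> have q8: "q mod 8 = 3 \<or> q mod 8 = 5" by presburger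
  have "q > 2" using assms prime_ge_2_int[of q] by presburger
  then have "\<not> [2 = 0] (mod q)" by (auto simp: cong_0_iff dest: zdvd_imp_le)
  with \<open>QuadRes q 2\<close> have "Legendre 2 q = 1" by (simp add: Legendre_def)
  define n where "n = nat q"
  then have q: "q = int n" using \<open>q > 2\<close> by simp
  then have "int (n mod 8) = q mod 8" by (simp add: of_nat_mod)
  with q8 have "n mod 8 \<in> {3, 5}" by auto
  moreover have "prime n" using \<open>prime q\<close> q by simp
  ultimately have "Legendre 2 q = -1" using Legendre_two_eq_neg_one[of n] q by simp
  with \<open>Legendre 2 q = 1\<close> show False by simp
qed

theorem theorem2p2:
  fixes p :: nat and x y :: int
  assumes "prime p" and "p \<ge> 3"
    and "x ^ 2 - 2 = y ^ p"
    and "y \<noteq> -1"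
  shows "odd x \<and> odd y \<and> y mod 8 = 7 \<and>
         (\<forall>q :: int. prime q \<and> q dvd y \<longrightarrow> q mod 8 = 1 \<or> q mod 8 = 7)"
proof -
  have oy: "odd y"
  proof
    assume "even y"
    then have "4 dvd y ^ p" using \<open>p \<ge> 3\<close> dvd_power_le[of 2 y 2 p] by simp
    with assms(3) four_not_dvd_square_minus_two show False by metis
  qed
  then have "odd (x\<^sup>2 - 2)" using assms(3) by simp
  then have ox: "odd x" by simp
  have "(x\<^sup>2 - 2) mod 8 = (x\<^sup>2 mod 8 - 2) mod 8" by (simp add: mod_diff_left_eq)
  then have "y ^ p mod 8 = 7" using odd_square_mod_8[OF ox] assms(3) by simp
  moreover have "odd p" using assms(1,2) prime_odd_nat[of p] by auto
  ultimately have y8: "y mod 8 = 7" using odd_power_mod_8[OF oy] by simp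
  have "q mod 8 = 1 \<or> q mod 8 = 7" if "prime q" "q dvd y" for q :: int
  proof (rule QuadRes_two_imp_mod_8)
    show "prime q" by fact
    show "odd q" using oy \<open>q dvd y\<close> by (metis dvd_trans)
    have "q dvd y ^ p" using dvd_power_le[of q y 1 p] \<open>q dvd y\<close> \<open>p \<ge> 3\<close> by simp
    with assms(3) have "q dvd x\<^sup>2 - 2" by simp
    then show "QuadRes q 2" unfolding QuadRes_def by (auto simp: cong_iff_dvd_diff)
  qed
  with ox oy y8 show ?thesis by blast
qed

end
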